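(* Let $\mathbf{x}=(x_s)_{s\in\mathbb{Z}^3}\in\mathbb{C}^{\mathbb{Z}^3}$ satisfy the Kashaev equation, i.e. $K^C(\mathbf{x})=0$ for every unit cube $C$ in $\mathbb{Z}^3$. Then for every $v\in\mathbb{Z}^3$, $$\Big(\prod_{C\ni v}K^C_v(\mathbf{x})\Big)^2=\Big(\prod_{S\ni v}(x_vx_{v_2}+x_{v_1}x_{v_3})\Big)^2,$$ where the first product is over the $8$ unit cubes $C$ containing $v$, and the second product is over the $12$ unit squares $S$ (with vertices in $\mathbb{Z}^3$) containing $v$, with $v,v_1,v_2,v_3$ the vertices of $S$ listed in cyclic order. Moreover, $$\Big(\prod_{\substack{(i_1,i_2,i_3)\in\{-1,1\}^3\\ i_1i_2i_3=1}}K_v^{C_v(i_1,i_2,i_3)}(\mathbf{x})\Big)^2=\Big(\prod_{\substack{(i_1,i_2,i_3)\in\{-1,1\}^3\\ i_1i_2i_3=-1}}K_v^{C_v(i_1,i_2,i_3)}(\mathbf{x})\Big)^2=\prod_{S\ni v}(x_vx_{v_2}+x_{v_1}x_{v_3}).$$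
   Context: For $v\in\mathbb{Z}^3$ and $(i_1,i_2,i_3)\in\{-1,1\}^3$, $C_v(i_1,i_2,i_3)$ denotes the unique unit cube in $\mathbb{Z}^3$ containing $v$ and $v+(i_1,i_2,i_3)$. For a unit cube $C$ and $\mathbf{x}\in\mathbb{C}^{\mathbb{Z}^3}$, label the values of $\mathbf{x}$ at the vertices of $C$ as $z_{ijk}$, $i,j,k\in\{0,1\}$, via any identification of $C$ with $\{0,1\}^3$ by a cube isomorphism, and set $a=z_{000}z_{111}$, $b=z_{100}z_{011}$, $c=z_{010}z_{101}$, $d=z_{001}z_{110}$, $s=z_{000}z_{011}z_{101}z_{110}$, $t=z_{111}z_{100}z_{010}z_{001}$, and $K^C(\mathbf{x})=2(a^2+b^2+c^2+d^2)-(a+b+c+d)^2-4(s+t)$ (this is independent of the identification). For a vertex $v$ of $C$, $K^C_v(\mathbf{x})$ is defined by choosing such a labeling with $z_{000}=x_v$ (so $z_{111}$ is the value at the vertex opposite $v$) and setting $K^C_v(\mathbf{x})=\tfrac12\big(z_{111}z_{000}^2-z_{000}(z_{100}z_{011}+z_{010}z_{101}+z_{001}z_{110})\big)-z_{100}z_{010}z_{001}$. *)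

theory Defs
  imports Complex_Main
begin

type_synonym pt = "int \<times> int \<times> int"

definition sh :: "pt \<Rightarrow> int \<Rightarrow> int \<Rightarrow> int \<Rightarrow> pt" where
  "sh v a b c = (case v of (p, q, r) \<Rightarrow> (p + a, q + b, r + c))"

definition ev :: "nat \<Rightarrow> int \<Rightarrow> pt" where
  "ev p a = (if p = 0 then a else 0, if p = 1 then a else 0, if p = 2 then a else 0)"

definition padd :: "pt \<Rightarrow> pt \<Rightarrow> pt" where
  "padd u w = (case u of (p, q, r) \<Rightarrow> sh w p q r)"

text \<open>K^C for a cube whose vertex values are z i j k, i j k in {0,1}.\<close>
definition Kcube :: "(nat \<Rightarrow> nat \<Rightarrow> nat \<Rightarrow> complex) \<Rightarrow> complex" where
  "Kcube z = (let a = z 0 0 0 * z 1 1 1; b = z 1 0 0 * z 0 1 1;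
                  c = z 0 1 0 * z 1 0 1; d = z 0 0 1 * z 1 1 0;
                  s = z 0 0 0 * z 0 1 1 * z 1 0 1 * z 1 1 0;
                  t = z 1 1 1 * z 1 0 0 * z 0 1 0 * z 0 0 1
              in 2 * (a^2 + b^2 + c^2 + d^2) - (a + b + c + d)^2 - 4 * (s + t))"

text \<open>K^C_v for a labelling with z 0 0 0 = x_v.\<close>
definition Kvert :: "(nat \<Rightarrow> nat \<Rightarrow> nat \<Rightarrow> complex) \<Rightarrow> complex" where
  "Kvert z = (1/2) * (z 1 1 1 * (z 0 0 0)^2
                 - z 0 0 0 * (z 1 0 0 * z 0 1 1 + z 0 1 0 * z 1 0 1 + z 0 0 1 * z 1 1 0))
             - z 1 0 0 * z 0 1 0 * z 0 0 1"

text \<open>Every unit cube is {w + (i,j,k) | i,j,k in {0,1}} for a unique w; labelled accordingly.\<close>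
definition kashaev :: "(pt \<Rightarrow> complex) \<Rightarrow> bool" where
  "kashaev x \<longleftrightarrow> (\<forall>w. Kcube (\<lambda>i j k. x (sh w (int i) (int j) (int k))) = 0)"

definition KvC :: "(pt \<Rightarrow> complex) \<Rightarrow> pt \<Rightarrow> int \<Rightarrow> int \<Rightarrow> int \<Rightarrow> complex" where
  "KvC x v i1 i2 i3 = Kvert (\<lambda>i j k. x (sh v (int i * i1) (int j * i2) (int k * i3)))"

definition signs3 :: "(int \<times> int \<times> int) set" where
  "signs3 = {-1, 1} \<times> {-1, 1} \<times> {-1, 1}"

text \<open>The 12 unit squares containing v: directions p<q, signs a b; cyclic vertices
  v, v + a e_p, v + a e_p + b e_q, v + b e_q.\<close>
definition squares_at :: "((nat \<times> nat) \<times> int \<times> int) set" where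
  "squares_at = {(0,1), (0,2), (1,2)} \<times> {-1, 1} \<times> {-1, 1}"

definition sq_term :: "(pt \<Rightarrow> complex) \<Rightarrow> pt \<Rightarrow> (nat \<times> nat) \<times> int \<times> int \<Rightarrow> complex" where
  "sq_term x v s = (case s of ((p, q), a, b) \<Rightarrow>
     x v * x (padd (padd (ev p a) (ev q b)) v) + x (padd (ev p a) v) * x (padd (ev q b) v))"

end

theory Submission imports Defs begin

text \<open>For every cube C containing v, the polynomial identity
  (K^C_v)^2 - (product of the three faces of C at v) = x_v^2/4 K^C
  shows that on a solution of the Kashaev equation (K^C_v)^2 is the product of the three
  face terms of C at v. Among the four cubes C_v(i1,i2,i3) with a fixed value of i1 i2 i3,
  every one of the twelve unit squares at v is a face of exactly one cube, which gives the
  second and third identities; the first is their product.\<close>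

lemma Kvert_square_eq:
  "(Kvert z)^2 = (z 0 0 0 * z 1 1 0 + z 1 0 0 * z 0 1 0) * (z 0 0 0 * z 1 0 1 + z 1 0 0 * z 0 0 1)
      * (z 0 0 0 * z 0 1 1 + z 0 1 0 * z 0 0 1) + (z 0 0 0)^2 / 4 * Kcube z"
  unfolding Kvert_def Kcube_def Let_def by (simp add: field_simps; algebra)

text \<open>C_v(i1,i2,i3) is the cube with corner v + (min 0 i1, min 0 i2, min 0 i3), labelled
  through reflections of the coordinates, and K^C does not depend on the labelling.\<close>
lemma kashaev_Kcube_signed:
  assumes "kashaev x" and "(i1, i2, i3) \<in> signs3"
  shows "Kcube (\<lambda>i j k. x (sh v (int i * i1) (int j * i2) (int k * i3))) = 0"
proof -
  obtain p q r where v: "v = (p, q, r)" by (cases v) auto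
  have corner: "Kcube (\<lambda>i j k. x (sh (p + min 0 i1, q + min 0 i2, r + min 0 i3)
      (int i) (int j) (int k))) = 0"
    using assms(1) unfolding kashaev_def by blast
  from assms(2) have "i1 \<in> {-1, 1}" "i2 \<in> {-1, 1}" "i3 \<in> {-1, 1}"
    by (auto simp: signs3_def)
  then show ?thesis using corner unfolding v
    by (auto simp: Kcube_def Let_def sh_def algebra_simps)
qed

lemma kashaev_KvC_square:
  assumes "kashaev x" and "(i1, i2, i3) \<in> signs3"
  shows "(KvC x v i1 i2 i3)^2
    = sq_term x v ((0,1), i1, i2) * sq_term x v ((0,2), i1, i3) * sq_term x v ((1,2), i2, i3)"
proof -
  let ?z = "\<lambda>i j k. x (sh v (int i * i1) (int j * i2) (int k * i3))"
  obtain p q r where v: "v = (p, q, r)" by (cases v) auto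
  have "sq_term x v ((0,1), i1, i2) = ?z 0 0 0 * ?z 1 1 0 + ?z 1 0 0 * ?z 0 1 0"
    and "sq_term x v ((0,2), i1, i3) = ?z 0 0 0 * ?z 1 0 1 + ?z 1 0 0 * ?z 0 0 1"
    and "sq_term x v ((1,2), i2, i3) = ?z 0 0 0 * ?z 0 1 1 + ?z 0 1 0 * ?z 0 0 1"
    unfolding v by (simp_all add: sq_term_def sh_def padd_def ev_def)
  with Kvert_square_eq[of ?z] kashaev_Kcube_signed[OF assms] show ?thesis
    unfolding KvC_def by simp
qed

lemma signs3_even_eq:
  "{(i1, i2, i3) \<in> signs3. i1 * i2 * i3 = 1} = {(1,1,1), (1,-1,-1), (-1,1,-1), (-1,-1,1)}"
  by (auto simp: signs3_def)

lemma signs3_odd_eq: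
  "{(i1, i2, i3) \<in> signs3. i1 * i2 * i3 = -1} = {(-1,-1,-1), (-1,1,1), (1,-1,1), (1,1,-1)}"
  by (auto simp: signs3_def)

lemma signs3_split:
  "signs3 = {(i1, i2, i3) \<in> signs3. i1 * i2 * i3 = 1} \<union> {(i1, i2, i3) \<in> signs3. i1 * i2 * i3 = -1}"
  by (auto simp: signs3_def)

lemma prod_squares_at:
  "(\<Prod>s\<in>squares_at. f s) =
     f ((0,1),1,1) * f ((0,1),1,-1) * f ((0,1),-1,1) * f ((0,1),-1,-1) *
     f ((0,2),1,1) * f ((0,2),1,-1) * f ((0,2),-1,1) * f ((0,2),-1,-1) *
     f ((1,2),1,1) * f ((1,2),1,-1) * f ((1,2),-1,1) * f ((1,2),-1,-1)"
proof -
  have enum: "squares_at = {((0,1),1,1), ((0,1),1,-1), ((0,1),-1,1), ((0,1),-1,-1),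
      ((0,2),1,1), ((0,2),1,-1), ((0,2),-1,1), ((0,2),-1,-1),
      ((1,2),1,1), ((1,2),1,-1), ((1,2),-1,1), ((1,2),-1,-1)}"
    by (auto simp: squares_at_def)
  show ?thesis unfolding enum by (simp add: ac_simps)
qed

theorem proposition2p8:
  fixes x :: "pt \<Rightarrow> complex" and v :: pt
  assumes "kashaev x"
  shows "(\<Prod>(i1, i2, i3)\<in>signs3. KvC x v i1 i2 i3)^2 = (\<Prod>s\<in>squares_at. sq_term x v s)^2
    \<and> (\<Prod>(i1, i2, i3)\<in>{(i1, i2, i3)\<in>signs3. i1 * i2 * i3 = 1}. KvC x v i1 i2 i3)^2
           = (\<Prod>s\<in>squares_at. sq_term x v s)
    \<and> (\<Prod>(i1, i2, i3)\<in>{(i1, i2, i3)\<in>signs3. i1 * i2 * i3 = -1}. KvC x v i1 i2 i3)^2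
           = (\<Prod>s\<in>squares_at. sq_term x v s)"
proof -
  let ?K = "\<lambda>(i1, i2, i3). KvC x v i1 i2 i3"
  let ?even = "{(i1, i2, i3) \<in> signs3. i1 * i2 * i3 = 1}"
  let ?odd = "{(i1, i2, i3) \<in> signs3. i1 * i2 * i3 = -1}"
  let ?P = "\<Prod>s\<in>squares_at. sq_term x v s"
  note face_square = kashaev_KvC_square[OF assms, unfolded signs3_def]
  have even: "(prod ?K ?even)^2 = ?P"
    unfolding signs3_even_eq prod_squares_at
    by (simp add: power_mult_distrib face_square ac_simps)
  have odd: "(prod ?K ?odd)^2 = ?P"
    unfolding signs3_odd_eq prod_squares_at
    by (simp add: power_mult_distrib face_square ac_simps)
  have "prod ?K signs3 = prod ?K ?even * prod ?K ?odd"
    by (subst signs3_split, rule prod.union_disjoint) (auto simp: signs3_even_eq signs3_odd_eq)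
  then have "(prod ?K signs3)^2 = (prod ?K ?even)^2 * (prod ?K ?odd)^2"
    by (simp only: power_mult_distrib)
  also have "\<dots> = ?P^2"
    unfolding even odd by (rule power2_eq_square[symmetric])
  finally show ?thesis using even odd by simp
qed

end
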